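(* Let $u,v:\mathbb{C}\to\mathbb{R}$ be harmonic and $f=u+iv$. Suppose there exist $0\le\alpha<1$, $a\ge 0$ and $b\in\mathbb{R}$ such that $v(z)\le a|u(z)|^{\alpha}+b$ for all $z\in\mathbb{C}$. Then $v$ is constant. In particular $f(\mathbb{C})$ is a horizontal line or a point. *)

theory Defs
  imports "HOL-Analysis.Analysis"
begin

text \<open>Directional partial derivative of a real-valued function on the plane
  (identified with the complex numbers) in direction d; for d = 1 this is
  the partial derivative in x, for d = i the partial derivative in y.\<close>
definition partial_dir :: "(complex \<Rightarrow> real) \<Rightarrow> complex \<Rightarrow> complex \<Rightarrow> real" where
  "partial_dir g d z = deriv (\<lambda>t::real. g (z + of_real t * d)) 0"

definition harmonic :: "(complex \<Rightarrow> real) \<Rightarrow> bool" where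
  "harmonic g \<longleftrightarrow>
     (\<forall>z. g differentiable (at z)) \<and>
     (\<forall>d\<in>{1, \<i>}. \<forall>z. partial_dir g d differentiable (at z)) \<and>
     (\<forall>d\<in>{1, \<i>}. \<forall>e\<in>{1, \<i>}. continuous_on UNIV (partial_dir (partial_dir g d) e)) \<and>
     (\<forall>z. partial_dir (partial_dir g 1) 1 z + partial_dir (partial_dir g \<i>) \<i> z = 0)"

text \<open>Real power x^p for x >= 0 with the usual convention 0^0 = 1
  (Isabelle's powr has 0 powr 0 = 0).\<close>
definition rpow :: "real \<Rightarrow> real \<Rightarrow> real" where
  "rpow x p = (if p = 0 then 1 else x powr p)"

end

theory Submission
  imports Defs "HOL-Complex_Analysis.Complex_Analysis"
begin

text \<open>
  A harmonic function on the plane is the real part of an entire function: by Schwarz's theorem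
  and Laplace's equation, \<open>u\<^sub>x - i u\<^sub>y\<close> satisfies the Cauchy-Riemann equations,
  and a primitive \<open>G\<close> of it has \<open>Re G = u\<close> up to a constant. So \<open>u = Re G\<close>,
  \<open>v = Re H\<close> with \<open>G\<close>, \<open>H\<close> entire. Above a level \<open>M\<close> exceeding the bound for
  \<open>v\<close> on \<open>{u = 0}\<close>, \<open>Re G\<close> has a fixed sign on each component, so
  \<open>exp (r (H - M - \<epsilon> sgn(Re G) G))\<close> is holomorphic there; sublinearity of
  \<open>|u|\<^sup>\<alpha>\<close> and the maximum principle (with a factor \<open>1/(z - z\<^sub>0)\<close> to handle
  the unbounded domain), followed by \<open>r \<rightarrow> \<infinity>\<close> and \<open>\<epsilon> \<rightarrow> 0\<close>,
  give \<open>v \<le> M\<close>. Liouville's theorem applied to \<open>exp H\<close> makes \<open>v\<close> constant, and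
  \<open>u\<close> is either constant or, by Liouville again and connectedness, onto \<open>\<real>\<close>.
\<close>

lemma linear_complex_to_real_eq:
  fixes D :: "complex \<Rightarrow> real"
  assumes "linear D"
  shows "D h = Re h * D 1 + Im h * D \<i>"
proof -
  have "h = Re h *\<^sub>R 1 + Im h *\<^sub>R \<i>" by (simp add: complex_eq_iff)
  then have "D h = D (Re h *\<^sub>R 1 + Im h *\<^sub>R \<i>)" by simp
  also have "\<dots> = Re h * D 1 + Im h * D \<i>"
    using assms by (simp add: linear_add linear_scale)
  finally show ?thesis .
qed

lemma has_real_derivative_along_line:
  fixes g :: "complex \<Rightarrow> real"
  assumes "(g has_derivative D) (at (c + of_real s * d))"
  shows "((\<lambda>t. g (c + of_real t * d)) has_real_derivative D d) (at s)"
proof -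
  have "((\<lambda>t::real. c + of_real t * d) has_derivative (\<lambda>h. h *\<^sub>R d)) (at s)"
    by (auto intro!: derivative_eq_intros simp: scaleR_conv_of_real)
  from has_derivative_compose[OF this assms]
  have "((\<lambda>t. g (c + of_real t * d)) has_derivative (\<lambda>h. D (h *\<^sub>R d))) (at s)"
    by (simp add: o_def)
  moreover have "(\<lambda>h. D (h *\<^sub>R d)) = (*) (D d)"
    using linear_scale[OF has_derivative_linear[OF assms]] by (simp add: fun_eq_iff)
  ultimately show ?thesis
    by (simp add: has_field_derivative_def)
qed

lemma partial_dir_eq_derivative:
  fixes g :: "complex \<Rightarrow> real"
  assumes "(g has_derivative D) (at z)"
  shows "partial_dir g d z = D d"
  using has_real_derivative_along_line[of g D z 0 d] assms
  unfolding partial_dir_def by (simp add: DERIV_imp_deriv)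

lemma has_derivative_partial_dir:
  fixes g :: "complex \<Rightarrow> real"
  assumes "g differentiable (at z)"
  shows "(g has_derivative (\<lambda>h. Re h * partial_dir g 1 z + Im h * partial_dir g \<i> z)) (at z)"
proof -
  obtain D where D: "(g has_derivative D) (at z)"
    using assms by (auto simp: differentiable_def)
  moreover have "D = (\<lambda>h. Re h * partial_dir g 1 z + Im h * partial_dir g \<i> z)"
  proof
    fix h
    show "D h = Re h * partial_dir g 1 z + Im h * partial_dir g \<i> z"
      using linear_complex_to_real_eq[OF has_derivative_linear[OF D], of h]
      by (simp only: partial_dir_eq_derivative[OF D])
  qed
  ultimately show ?thesis by simp
qed

lemma has_real_derivative_partial_dir:
  fixes g :: "complex \<Rightarrow> real"
  assumes "g differentiable (at (c + of_real s * d))"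
  shows "((\<lambda>t. g (c + of_real t * d)) has_real_derivative partial_dir g d (c + of_real s * d)) (at s)"
proof -
  obtain D where "(g has_derivative D) (at (c + of_real s * d))"
    using assms by (auto simp: differentiable_def)
  then show ?thesis
    by (simp add: has_real_derivative_along_line partial_dir_eq_derivative)
qed

lemma second_difference_mean_value:
  fixes u :: "complex \<Rightarrow> real"
  assumes du: "\<And>w. u differentiable (at w)"
    and dp: "\<And>w. partial_dir u d differentiable (at w)"
    and t: "t > 0"
  obtains \<xi> \<eta> where "0 < \<xi>" "\<xi> < t" "0 < \<eta>" "\<eta> < t"
    "u (z + of_real t * d + of_real t * e) - u (z + of_real t * d) - u (z + of_real t * e) + u z
       = t * t * partial_dir (partial_dir u d) e (z + of_real \<xi> * d + of_real \<eta> * e)"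
proof -
  let ?p = "partial_dir u d"
  define \<phi> where "\<phi> s = u (z + of_real t * e + of_real s * d) - u (z + of_real s * d)" for s
  have \<phi>': "(\<phi> has_real_derivative
          ?p (z + of_real t * e + of_real s * d) - ?p (z + of_real s * d)) (at s)" for s
    unfolding \<phi>_def by (intro DERIV_diff has_real_derivative_partial_dir du)
  then obtain \<xi> where \<xi>: "0 < \<xi>" "\<xi> < t"
    and \<phi>: "\<phi> t - \<phi> 0 = t * (?p (z + of_real t * e + of_real \<xi> * d) - ?p (z + of_real \<xi> * d))"
    using MVT2[OF t \<phi>'] by auto
  have p': "((\<lambda>r. ?p (z + of_real \<xi> * d + of_real r * e)) has_real_derivative
          partial_dir ?p e (z + of_real \<xi> * d + of_real r * e)) (at r)" for r
    by (rule has_real_derivative_partial_dir[OF dp])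
  then obtain \<eta> where \<eta>: "0 < \<eta>" "\<eta> < t"
    and p: "?p (z + of_real \<xi> * d + of_real t * e) - ?p (z + of_real \<xi> * d + of_real 0 * e)
            = t * partial_dir ?p e (z + of_real \<xi> * d + of_real \<eta> * e)"
    using MVT2[OF t p'] by auto
  show thesis
  proof (rule that[OF \<xi> \<eta>])
    show "u (z + of_real t * d + of_real t * e) - u (z + of_real t * d) - u (z + of_real t * e) + u z
        = t * t * partial_dir ?p e (z + of_real \<xi> * d + of_real \<eta> * e)"
      using \<phi> p unfolding \<phi>_def by (simp add: algebra_simps)
  qed
qed

lemma mixed_partials_agree_nearby:
  fixes u :: "complex \<Rightarrow> real"
  assumes du: "\<And>w. u differentiable (at w)"
    and dd: "\<And>w. partial_dir u d differentiable (at w)"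
    and de: "\<And>w. partial_dir u e differentiable (at w)"
    and \<delta>: "\<delta> > 0"
  obtains P Q where "dist P z < \<delta>" "dist Q z < \<delta>"
    "partial_dir (partial_dir u d) e P = partial_dir (partial_dir u e) d Q"
proof -
  define t where "t = \<delta> / (cmod d + cmod e + 1)"
  have t: "t > 0" using \<delta> by (simp add: t_def add_nonneg_pos)
  have near: "dist (z + of_real x * d + of_real y * e) z < \<delta>"
    if "0 < x" "x < t" "0 < y" "y < t" for x y
  proof -
    have "dist (z + of_real x * d + of_real y * e) z \<le> x * cmod d + y * cmod e"
      using norm_triangle_ineq[of "of_real x * d" "of_real y * e"] that
      by (simp add: dist_norm norm_mult)
    also have "\<dots> \<le> t * (cmod d + cmod e)"
      using that by (simp add: distrib_left add_mono mult_right_mono)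
    also have "\<dots> = \<delta> * ((cmod d + cmod e) / (cmod d + cmod e + 1))"
      by (simp add: t_def)
    also have "\<dots> < \<delta> * 1"
      using \<delta> by (intro mult_strict_left_mono) (auto simp: add_nonneg_pos)
    finally show ?thesis by simp
  qed
  obtain \<xi> \<eta> where \<xi>\<eta>: "0 < \<xi>" "\<xi> < t" "0 < \<eta>" "\<eta> < t"
    and diff_de: "u (z + of_real t * d + of_real t * e) - u (z + of_real t * d) - u (z + of_real t * e) + u z
       = t * t * partial_dir (partial_dir u d) e (z + of_real \<xi> * d + of_real \<eta> * e)"
    using second_difference_mean_value[OF du dd t] .
  obtain \<xi>' \<eta>' where \<xi>\<eta>': "0 < \<xi>'" "\<xi>' < t" "0 < \<eta>'" "\<eta>' < t"
    and diff_ed: "u (z + of_real t * e + of_real t * d) - u (z + of_real t * e) - u (z + of_real t * d) + u z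
       = t * t * partial_dir (partial_dir u e) d (z + of_real \<xi>' * e + of_real \<eta>' * d)"
    using second_difference_mean_value[OF du de t] .
  \<comment> \<open>both mean-value expansions describe the same second difference, which is symmetric in d, e\<close>
  have "partial_dir (partial_dir u d) e (z + of_real \<xi> * d + of_real \<eta> * e)
      = partial_dir (partial_dir u e) d (z + of_real \<eta>' * d + of_real \<xi>' * e)"
    using diff_de diff_ed t by (simp add: algebra_simps)
  then show thesis
    using that near[OF \<xi>\<eta>] near[OF \<xi>\<eta>'(3,4,1,2)] by blast
qed

lemma partial_dir_commute:
  fixes u :: "complex \<Rightarrow> real"
  assumes du: "\<And>w. u differentiable (at w)"
    and dd: "\<And>w. partial_dir u d differentiable (at w)"
    and de: "\<And>w. partial_dir u e differentiable (at w)"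
    and cde: "continuous_on UNIV (partial_dir (partial_dir u d) e)"
    and ced: "continuous_on UNIV (partial_dir (partial_dir u e) d)"
  shows "partial_dir (partial_dir u d) e z = partial_dir (partial_dir u e) d z"
proof -
  let ?f = "partial_dir (partial_dir u d) e" and ?g = "partial_dir (partial_dir u e) d"
  have cont_at: "\<exists>\<delta>>0. \<forall>x. dist x z < \<delta> \<longrightarrow> dist (h x) (h z) < \<epsilon>"
    if "continuous_on UNIV h" "\<epsilon> > 0" for h :: "complex \<Rightarrow> real" and \<epsilon>
    using that unfolding continuous_on_iff by blast
  have "\<bar>?f z - ?g z\<bar> \<le> \<epsilon>" if "\<epsilon> > 0" for \<epsilon>
  proof -
    obtain \<delta>1 where "\<delta>1 > 0" and \<delta>1: "\<forall>x. dist x z < \<delta>1 \<longrightarrow> dist (?f x) (?f z) < \<epsilon> / 2"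
      using cont_at[OF cde, of "\<epsilon> / 2"] \<open>\<epsilon> > 0\<close> by auto
    obtain \<delta>2 where "\<delta>2 > 0" and \<delta>2: "\<forall>x. dist x z < \<delta>2 \<longrightarrow> dist (?g x) (?g z) < \<epsilon> / 2"
      using cont_at[OF ced, of "\<epsilon> / 2"] \<open>\<epsilon> > 0\<close> by auto
    have "min \<delta>1 \<delta>2 > 0" using \<open>\<delta>1 > 0\<close> \<open>\<delta>2 > 0\<close> by simp
    then obtain P Q where PQ: "dist P z < min \<delta>1 \<delta>2" "dist Q z < min \<delta>1 \<delta>2" "?f P = ?g Q"
      using mixed_partials_agree_nearby[OF du dd de] by blast
    have "\<bar>?f P - ?f z\<bar> < \<epsilon> / 2" "\<bar>?g Q - ?g z\<bar> < \<epsilon> / 2"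
      using \<delta>1 \<delta>2 PQ(1,2) by (simp_all add: dist_real_def)
    with PQ(3) show ?thesis by linarith
  qed
  then have "?f z - ?g z = 0" by (rule dense_eq0_I)
  then show ?thesis by simp
qed

lemma harmonic_conj_gradient_holomorphic:
  assumes "harmonic u"
  shows "(\<lambda>z. of_real (partial_dir u 1 z) - \<i> * of_real (partial_dir u \<i> z)) holomorphic_on UNIV"
proof -
  let ?p = "partial_dir u 1" and ?q = "partial_dir u \<i>"
  have dp: "?p differentiable (at z)" and dq: "?q differentiable (at z)" for z
    using assms by (auto simp: harmonic_def)
  have sym: "partial_dir ?p \<i> z = partial_dir ?q 1 z" for z
    using assms by (intro partial_dir_commute) (auto simp: harmonic_def)
  have laplace: "partial_dir ?p 1 z + partial_dir ?q \<i> z = 0" for z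
    using assms by (simp add: harmonic_def)
  have "((\<lambda>z. of_real (?p z) - \<i> * of_real (?q z)) has_field_derivative
          of_real (partial_dir ?p 1 w) - \<i> * of_real (partial_dir ?q 1 w)) (at w)" for w
  proof -
    have "((\<lambda>z. of_real (?p z) - \<i> * of_real (?q z)) has_derivative
            (\<lambda>h. of_real (Re h * partial_dir ?p 1 w + Im h * partial_dir ?p \<i> w)
                 - \<i> * of_real (Re h * partial_dir ?q 1 w + Im h * partial_dir ?q \<i> w))) (at w)"
      by (intro derivative_eq_intros)
        (auto intro: has_derivative_partial_dir[OF dp] has_derivative_partial_dir[OF dq])
    moreover have "(\<lambda>h. of_real (Re h * partial_dir ?p 1 w + Im h * partial_dir ?p \<i> w)
                 - \<i> * of_real (Re h * partial_dir ?q 1 w + Im h * partial_dir ?q \<i> w))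
        = (*) (of_real (partial_dir ?p 1 w) - \<i> * of_real (partial_dir ?q 1 w))"
      using sym[of w] laplace[of w]
      by (simp add: fun_eq_iff complex_eq_iff algebra_simps eq_neg_iff_add_eq_0[symmetric])
    ultimately show ?thesis by (simp add: has_field_derivative_def)
  qed
  then show ?thesis
    by (auto simp: holomorphic_on_def field_differentiable_def)
qed

lemma harmonic_eq_Re_entire:
  assumes "harmonic u"
  obtains G where "G holomorphic_on UNIV" "\<And>z. u z = Re (G z)"
proof -
  let ?g = "\<lambda>z. of_real (partial_dir u 1 z) - \<i> * of_real (partial_dir u \<i> z)"
  obtain G where G: "\<And>z. (G has_field_derivative ?g z) (at z)"
    using holomorphic_convex_primitive'[OF _ _ harmonic_conj_gradient_holomorphic[OF assms]] by auto
  have "((\<lambda>z. u z - Re (G z)) has_derivative (\<lambda>h. 0)) (at z)" for z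
  proof -
    have "u differentiable (at z)" using assms by (simp add: harmonic_def)
    from has_derivative_partial_dir[OF this] G[of z]
    have "((\<lambda>z. u z - Re (G z)) has_derivative
            (\<lambda>h. Re h * partial_dir u 1 z + Im h * partial_dir u \<i> z - Re (?g z * h))) (at z)"
      unfolding has_field_derivative_def by (intro derivative_eq_intros) auto
    then show ?thesis by simp
  qed
  then obtain c where "\<And>z. u z - Re (G z) = c"
    using has_derivative_zero_constant[of UNIV "\<lambda>z. u z - Re (G z)"] by auto
  moreover have "G holomorphic_on UNIV"
    using G by (auto simp: holomorphic_on_def field_differentiable_def)
  then have "(\<lambda>z. G z + of_real c) holomorphic_on UNIV"
    by (intro holomorphic_intros)
  ultimately show thesis
    by (intro that[of "\<lambda>z. G z + of_real c"]) (auto simp: algebra_simps)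
qed

lemma maximum_modulus_unbounded:
  fixes F :: "complex \<Rightarrow> complex"
  assumes "open \<Omega>" "open T" "closure \<Omega> \<subseteq> T" "F holomorphic_on T"
    and frontier: "\<And>z. z \<in> frontier \<Omega> \<Longrightarrow> cmod (F z) \<le> B"
    and far: "\<And>z. z \<in> \<Omega> \<Longrightarrow> R \<le> cmod z \<Longrightarrow> cmod (F z) \<le> B"
    and "\<xi> \<in> \<Omega>"
  shows "cmod (F \<xi>) \<le> B"
proof -
  define S where "S = \<Omega> \<inter> ball 0 (max R (cmod \<xi> + 1))"
  have "closure S \<subseteq> T"
    using closure_mono[of S \<Omega>] assms(3) by (auto simp: S_def)
  show ?thesis
  proof (rule maximum_modulus_frontier[of F S])
    show "F holomorphic_on interior S"
      using interior_subset[of S] closure_subset[of S] \<open>closure S \<subseteq> T\<close>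
      by (intro holomorphic_on_subset[OF assms(4)]) auto
    show "continuous_on (closure S) F"
      using \<open>closure S \<subseteq> T\<close> by (intro holomorphic_on_imp_continuous_on holomorphic_on_subset[OF assms(4)])
    show "bounded S" by (simp add: S_def bounded_Int)
    show "\<xi> \<in> S" using \<open>\<xi> \<in> \<Omega>\<close> by (simp add: S_def)
  next
    fix z assume "z \<in> frontier S"
    then have "z \<in> closure S" "z \<notin> S"
      using \<open>open \<Omega>\<close> by (auto simp: S_def frontier_def interior_open)
    show "cmod (F z) \<le> B"
    proof (cases "z \<in> \<Omega>")
      case True
      with \<open>z \<notin> S\<close> show ?thesis by (intro far) (auto simp: S_def)
    next
      case False
      with \<open>z \<in> closure S\<close> closure_mono[of S \<Omega>] show ?thesis
        using \<open>open \<Omega>\<close> by (intro frontier) (auto simp: S_def frontier_def interior_open)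
    qed
  qed
qed

lemma holomorphic_on_Re_sign_flip:
  assumes "G holomorphic_on UNIV"
  shows "(\<lambda>z. if 0 < Re (G z) then G z else - G z) holomorphic_on {z. Re (G z) \<noteq> 0}"
proof -
  let ?P = "\<lambda>z. if 0 < Re (G z) then G z else - G z"
  have "continuous_on UNIV (\<lambda>z. Re (G z))"
    using holomorphic_on_imp_continuous_on[OF assms] by (intro continuous_intros)
  then have opens: "open {z. 0 < Re (G z)}" "open {z. Re (G z) < 0}"
    by (auto intro!: open_Collect_less)
  have "?P holomorphic_on {z. 0 < Re (G z)}"
    by (rule holomorphic_cong[THEN iffD2, OF refl, of _ _ G])
      (auto intro: holomorphic_on_subset[OF assms])
  moreover have "?P holomorphic_on {z. Re (G z) < 0}"
    by (rule holomorphic_cong[THEN iffD2, OF refl, of _ _ "\<lambda>z. - G z"])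
      (auto intro!: holomorphic_intros holomorphic_on_subset[OF assms])
  ultimately have "?P holomorphic_on {z. 0 < Re (G z)} \<union> {z. Re (G z) < 0}"
    using opens by (rule holomorphic_on_Un)
  moreover have "{z. 0 < Re (G z)} \<union> {z. Re (G z) < 0} = {z. Re (G z) \<noteq> 0}" by auto
  ultimately show ?thesis by simp
qed

lemma nonpos_if_exp_multiples_bounded:
  fixes w L :: real
  assumes "\<And>r. r > 0 \<Longrightarrow> exp (r * w) \<le> L"
  shows "w \<le> 0"
proof (rule ccontr)
  assume "\<not> w \<le> 0"
  then have "(\<bar>L\<bar> + 1) / w * w = \<bar>L\<bar> + 1" by simp
  moreover have "exp (\<bar>L\<bar> + 1) \<le> L"
    using assms[of "(\<bar>L\<bar> + 1) / w"] \<open>\<not> w \<le> 0\<close> calculation by (simp add: add_nonneg_pos)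
  moreover have "\<bar>L\<bar> + 1 + 1 \<le> exp (\<bar>L\<bar> + 1)"
    using exp_ge_add_one_self[of "\<bar>L\<bar> + 1"] by simp
  ultimately show False by linarith
qed

lemma phragmen_lindelof_Re_minus_abs_Re:
  fixes G H :: "complex \<Rightarrow> complex"
  assumes hG: "G holomorphic_on UNIV" and hH: "H holomorphic_on UNIV"
    and \<rho>: "\<rho> > 0" and near: "\<And>z. dist z z0 < \<rho> \<Longrightarrow> Re (H z) < M"
    and nz: "\<And>z. M \<le> Re (H z) \<Longrightarrow> Re (G z) \<noteq> 0"
    and bound: "\<And>z. Re (H z) - M - \<epsilon> * \<bar>Re (G z)\<bar> \<le> C"
    and \<epsilon>: "\<epsilon> \<ge> 0"
  shows "Re (H \<xi>) - M - \<epsilon> * \<bar>Re (G \<xi>)\<bar> \<le> 0"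
proof (cases "M < Re (H \<xi>)")
  case False
  moreover have "0 \<le> \<epsilon> * \<bar>Re (G \<xi>)\<bar>" using \<epsilon> by simp
  ultimately show ?thesis by linarith
next
  case True
  define w where "w z = Re (H z) - M - \<epsilon> * \<bar>Re (G z)\<bar>" for z
  define P where "P z = (if 0 < Re (G z) then G z else - G z)" for z
  define T where "T = {z. Re (G z) \<noteq> 0} - {z0}"
  define \<Omega> where "\<Omega> = {z. M < Re (H z)}"
  have cRH: "continuous_on UNIV (\<lambda>z. Re (H z))"
    using holomorphic_on_imp_continuous_on[OF hH] by (intro continuous_intros)
  have "continuous_on UNIV (\<lambda>z. Re (G z))"
    using holomorphic_on_imp_continuous_on[OF hG] by (intro continuous_intros)
  then have "open T"
    unfolding T_def by (intro open_Diff open_Collect_neq) auto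
  have "open \<Omega>" using cRH by (auto simp: \<Omega>_def intro!: open_Collect_less)
  have "closure \<Omega> \<subseteq> {z. M \<le> Re (H z)}"
    using cRH by (intro closure_minimal) (auto simp: \<Omega>_def intro!: closed_Collect_le)
  have away: "\<rho> \<le> cmod (z - z0)" if "M \<le> Re (H z)" for z
    using near[of z] that by (force simp: dist_norm)
  then have "{z. M \<le> Re (H z)} \<subseteq> T"
    using nz \<rho> by (fastforce simp: T_def)
  have "exp (r * w \<xi>) \<le> cmod (\<xi> - z0) / \<rho>" if r: "r > 0" for r
  proof -
    define F where "F z = exp (of_real r * (H z - of_real M - of_real \<epsilon> * P z)) * of_real \<rho> / (z - z0)"
      for z
    have norm_F: "cmod (F z) = exp (r * w z) * \<rho> / cmod (z - z0)" for z
      using \<rho> by (simp add: F_def w_def P_def norm_divide norm_mult norm_exp_eq_Re)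
    have F_le_1: "cmod (F z) \<le> 1" if "exp (r * w z) * \<rho> \<le> cmod (z - z0)" for z
      using that \<rho> by (auto simp: norm_F divide_le_eq_1 intro: order.strict_trans2[rotated])
    have "cmod (F \<xi>) \<le> 1"
    proof (rule maximum_modulus_unbounded
        [where F = F and \<Omega> = \<Omega> and T = T and R = "cmod z0 + \<rho> * exp (r * C)"])
      show "F holomorphic_on T"
        unfolding F_def P_def T_def
        by (intro holomorphic_intros holomorphic_on_subset[OF holomorphic_on_Re_sign_flip[OF hG]]
            holomorphic_on_subset[OF hH]) auto
    next
      fix z assume "z \<in> frontier \<Omega>"
      then have "Re (H z) = M"
        using \<open>closure \<Omega> \<subseteq> _\<close> \<open>open \<Omega>\<close> by (force simp: frontier_def interior_open \<Omega>_def)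
      then have "exp (r * w z) * \<rho> \<le> 1 * cmod (z - z0)"
        using away[of z] \<rho> r \<epsilon> by (intro mult_mono) (auto simp: w_def mult_nonpos_nonneg)
      then show "cmod (F z) \<le> 1" by (intro F_le_1) simp
    next
      fix z assume "cmod z0 + \<rho> * exp (r * C) \<le> cmod z"
      moreover have "exp (r * w z) * \<rho> \<le> exp (r * C) * \<rho>"
        using bound[of z] r \<rho> by (simp add: w_def)
      ultimately show "cmod (F z) \<le> 1"
        using norm_triangle_ineq2[of z z0] by (intro F_le_1) (simp add: mult.commute)
    qed (use True \<open>open \<Omega>\<close> \<open>open T\<close> \<open>closure \<Omega> \<subseteq> _\<close> \<open>_ \<subseteq> T\<close> in \<open>auto simp: \<Omega>_def\<close>)
    moreover have "cmod (\<xi> - z0) > 0" using away[of \<xi>] True \<rho> by linarith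
    ultimately show ?thesis using \<rho> by (simp add: norm_F field_simps)
  qed
  then show ?thesis
    unfolding w_def by (rule nonpos_if_exp_multiples_bounded)
qed

lemma rpow_le_linear_plus_const:
  fixes \<alpha> a \<epsilon> :: real
  assumes "0 \<le> \<alpha>" "\<alpha> < 1" "0 \<le> a" "0 < \<epsilon>"
  obtains C where "\<And>t. 0 \<le> t \<Longrightarrow> a * rpow t \<alpha> \<le> \<epsilon> * t + C"
proof (cases "\<alpha> = 0")
  case True
  then show thesis using assms by (intro that[of a]) (simp add: rpow_def)
next
  case False
  define T where "T = (a / \<epsilon>) powr (1 / (1 - \<alpha>))"
  have T_pow: "T powr (1 - \<alpha>) = a / \<epsilon>"
    using assms by (simp add: T_def powr_powr)
  have "a * t powr \<alpha> \<le> \<epsilon> * t + a * T powr \<alpha>" if "0 \<le> t" for t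
  proof (cases "t \<le> T")
    case True
    then have "a * t powr \<alpha> \<le> a * T powr \<alpha>"
      using that assms by (intro mult_left_mono powr_mono2) auto
    then show ?thesis using that assms by (simp add: add_increasing)
  next
    case False
    have "0 \<le> T" by (simp add: T_def)
    with False have "0 < t" by linarith
    have "a * t powr \<alpha> = \<epsilon> * (T powr (1 - \<alpha>) * t powr \<alpha>)"
      using assms by (simp add: T_pow)
    also have "\<dots> \<le> \<epsilon> * (t powr (1 - \<alpha>) * t powr \<alpha>)"
      using False assms by (intro mult_left_mono mult_right_mono powr_mono2) (auto simp: T_def)
    also have "\<dots> = \<epsilon> * t"
      using \<open>0 < t\<close> by (simp add: powr_add[symmetric])
    finally show ?thesis using assms by (simp add: add_increasing2)
  qed
  with False show thesis by (intro that[of "a * T powr \<alpha>"]) (simp add: rpow_def)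
qed

lemma Liouville_Re_bounded_above:
  fixes H :: "complex \<Rightarrow> complex"
  assumes "H holomorphic_on UNIV" and "\<And>z. Re (H z) \<le> M"
  obtains c where "\<And>z. Re (H z) = c"
proof -
  have "(\<lambda>z. exp (H z)) holomorphic_on UNIV" using assms(1) by (intro holomorphic_intros)
  moreover have "bounded (range (\<lambda>z. exp (H z)))"
    unfolding bounded_iff using assms(2) by (intro exI[of _ "exp M"]) (auto simp: norm_exp_eq_Re)
  ultimately have "(\<lambda>z. exp (H z)) constant_on UNIV" by (rule Liouville_theorem)
  then obtain k where "\<And>z. exp (H z) = k" unfolding constant_on_def by blast
  then have "Re (H z) = ln (cmod k)" for z by (metis ln_exp norm_exp_eq_Re)
  then show thesis by (rule that)
qed

lemma Re_bounded_above_if_le_rpow_abs_Re: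
  fixes G H :: "complex \<Rightarrow> complex"
  assumes hG: "G holomorphic_on UNIV" and hH: "H holomorphic_on UNIV"
    and \<alpha>: "0 \<le> \<alpha>" "\<alpha> < 1" and a: "0 \<le> a"
    and le: "\<And>z. Re (H z) \<le> a * rpow \<bar>Re (G z)\<bar> \<alpha> + b"
  obtains M where "\<And>z. Re (H z) \<le> M"
proof -
  define M where "M = max (a * rpow 0 \<alpha> + b) (Re (H 0)) + 1"
  have "continuous_on UNIV (\<lambda>z. Re (H z))"
    using holomorphic_on_imp_continuous_on[OF hH] by (intro continuous_intros)
  moreover have "M - Re (H 0) > 0" by (simp add: M_def)
  ultimately have "\<exists>\<rho>>0. \<forall>z. dist z 0 < \<rho> \<longrightarrow> dist (Re (H z)) (Re (H 0)) < M - Re (H 0)"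
    unfolding continuous_on_iff by blast
  then obtain \<rho> where \<rho>: "\<rho> > 0"
    and \<rho>_near: "\<forall>z. dist z 0 < \<rho> \<longrightarrow> dist (Re (H z)) (Re (H 0)) < M - Re (H 0)"
    by blast
  have near: "Re (H z) < M" if "dist z 0 < \<rho>" for z
    using \<rho>_near that by (auto simp: dist_real_def)
  have nz: "Re (G z) \<noteq> 0" if "M \<le> Re (H z)" for z
    using le[of z] that by (auto simp: M_def)
  have "Re (H \<xi>) \<le> M" for \<xi>
  proof (rule field_le_epsilon)
    fix e :: real assume "0 < e"
    define \<epsilon> where "\<epsilon> = e / (\<bar>Re (G \<xi>)\<bar> + 1)"
    have "0 < \<epsilon>" using \<open>0 < e\<close> by (simp add: \<epsilon>_def add_nonneg_pos)
    then obtain C where C: "\<And>t. 0 \<le> t \<Longrightarrow> a * rpow t \<alpha> \<le> \<epsilon> * t + C"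
      using rpow_le_linear_plus_const[OF \<alpha> a] by blast
    have bound: "Re (H z) - M - \<epsilon> * \<bar>Re (G z)\<bar> \<le> C + b - M" for z
      using le[of z] C[of "\<bar>Re (G z)\<bar>"] by simp
    have "Re (H \<xi>) - M - \<epsilon> * \<bar>Re (G \<xi>)\<bar> \<le> 0"
      using phragmen_lindelof_Re_minus_abs_Re[of G H \<rho> 0, OF hG hH \<rho> near nz bound] \<open>0 < \<epsilon>\<close>
      by simp
    moreover have "\<epsilon> * \<bar>Re (G \<xi>)\<bar> \<le> e"
      using \<open>0 < e\<close> by (simp add: \<epsilon>_def field_simps)
    ultimately show "Re (H \<xi>) \<le> M + e" by linarith
  qed
  then show thesis by (rule that)
qed

lemma range_Re_entire_nonconstant:
  fixes G :: "complex \<Rightarrow> complex"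
  assumes hG: "G holomorphic_on UNIV" and nonconst: "\<nexists>c. \<forall>z. Re (G z) = c"
  shows "range (\<lambda>z. Re (G z)) = UNIV"
proof -
  have above: "\<exists>z. y < Re (G z)" for y
    using Liouville_Re_bounded_above[OF hG, of y] nonconst by (meson not_le)
  have "(\<lambda>z. - G z) holomorphic_on UNIV" using hG by (intro holomorphic_intros)
  then have below: "\<exists>z. Re (G z) < y" for y
    using Liouville_Re_bounded_above[of "\<lambda>z. - G z" "- y"] nonconst
    by (metis neg_le_iff_le not_le uminus_complex.sel(1) add.inverse_inverse)
  have "continuous_on UNIV (\<lambda>z. Re (G z))"
    using holomorphic_on_imp_continuous_on[OF hG] by (intro continuous_intros)
  then have "connected (range (\<lambda>z. Re (G z)))"
    by (rule connected_continuous_image[OF _ connected_UNIV])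
  moreover have "y \<in> range (\<lambda>z. Re (G z))" if "connected (range (\<lambda>z. Re (G z)))" for y
  proof -
    obtain z1 z2 where "Re (G z2) < y" "y < Re (G z1)" using above below by blast
    with that show ?thesis unfolding connected_iff_interval by (meson less_imp_le rangeI)
  qed
  ultimately show ?thesis by blast
qed

theorem corollary1:
  fixes u v :: "complex \<Rightarrow> real" and \<alpha> a b :: real
  assumes "harmonic u" and "harmonic v"
    and "0 \<le> \<alpha>" and "\<alpha> < 1" and "a \<ge> 0"
    and "\<forall>z. v z \<le> a * rpow \<bar>u z\<bar> \<alpha> + b"
  shows "(\<exists>c. \<forall>z. v z = c) \<and>
         ((\<exists>c. (\<lambda>z. complex_of_real (u z) + \<i> * complex_of_real (v z)) ` UNIV = {w. Im w = c}) \<or>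
          (\<exists>p. (\<lambda>z. complex_of_real (u z) + \<i> * complex_of_real (v z)) ` UNIV = {p}))"
proof -
  obtain G where hG: "G holomorphic_on UNIV" and uG: "\<And>z. u z = Re (G z)"
    using harmonic_eq_Re_entire[OF assms(1)] by blast
  obtain H where hH: "H holomorphic_on UNIV" and vH: "\<And>z. v z = Re (H z)"
    using harmonic_eq_Re_entire[OF assms(2)] by blast
  have "\<And>z. Re (H z) \<le> a * rpow \<bar>Re (G z)\<bar> \<alpha> + b"
    using assms(6) by (simp add: uG vH)
  then obtain M where "\<And>z. Re (H z) \<le> M"
    using Re_bounded_above_if_le_rpow_abs_Re[OF hG hH assms(3-5)] by blast
  then obtain c where "\<And>z. Re (H z) = c"
    using Liouville_Re_bounded_above[OF hH] by blast
  then have c: "\<And>z. v z = c" by (simp add: vH)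
  let ?f = "\<lambda>z. complex_of_real (u z) + \<i> * complex_of_real (v z)"
  have "(\<exists>k. \<forall>z. u z = k) \<or> range u = UNIV"
    using range_Re_entire_nonconstant[OF hG] uG by auto
  then have "?f ` UNIV = {w. Im w = c} \<or> (\<exists>p. ?f ` UNIV = {p})"
  proof
    assume "\<exists>k. \<forall>z. u z = k"
    then show ?thesis using c by auto
  next
    assume u: "range u = UNIV"
    have "w \<in> ?f ` UNIV" if "Im w = c" for w
    proof -
      obtain z where "u z = Re w" using u by (metis UNIV_I rangeE)
      then have "w = ?f z" using that c by (simp add: complex_eq_iff)
      then show ?thesis by blast
    qed
    then show ?thesis using c by auto
  qed
  with c show ?thesis by blast
qed

end
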